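(* Let $q\equiv 1\pmod 4$ be a prime power. Then: (1) $SP_q$ has properties $P(1,\frac{q-1}{2})$ and $P(2,\frac{q-5}{4})$; (2) $Tr(SP_q)$ has properties $P(1,q)$, $P(2,\frac{q-1}{2})$ and $P(3,\frac{q-5}{4})$; (3) $AT(SP_q)$ has properties $P(1,q-1)$, $P(2,\frac{q-3}{2})$ and $P(3,\max(0,\frac{q-9}{4}))$.
   Context: A signified graph is a simple graph with each edge labelled positive or negative. For $x\in\mathbb{F}_q^*$ let $\mathrm{sq}(x)=+1$ if $x$ is a square and $-1$ otherwise. $SP_q$ is the complete graph on $\mathbb{F}_q$ where $xy$ is negative iff $\mathrm{sq}(y-x)=-1$. For a signified graph $(H,\Lambda)$, $AT(H,\Lambda)$ has vertex set $\{u_0,u_1:u\in V(H)\}$; for every edge $uv$ of $H$ it has edges $u_0v_0,u_1v_1$ with the sign of $uv$ and $u_0v_1,u_1v_0$ with the opposite sign; no other edges. $Tr(SP_q)=AT(SP_q^+)$ where $SP_q^+$ is $SP_q$ plus a vertex $\infty$ joined positively to all vertices; explicitly its vertices are $u_i$, $u\in\mathbb{F}_q\cup\{\infty\}$, $i\in\{0,1\}$, with $u_iv_j$ ($u\ne v\in\mathbb{F}_q$) an edge of sign $\mathrm{sq}(u-v)(-1)^{i+j}$, $\infty_iv_j$ an edge of sign $(-1)^{i+j}$, and no other edges. A signed vector of size $k$ is an element of $\{+1,-1\}^k$. For a sequence $X=(v_1,\dots,v_k)$ of $k$ distinct pairwise adjacent vertices and a signed vector $\alpha$, a vertex $u$ is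 an $\alpha$-successor of $X$ if $uv_i$ is an edge of sign $\alpha_i$ for all $i$. A signified graph has property $P(k,l)$ if every sequence of $k$ distinct pairwise adjacent vertices has at least $l$ $\alpha$-successors for every signed vector $\alpha$ of size $k$. *)

theory Defs
  imports Main
begin

text \<open>A signified graph on the vertex type 'v is a function G :: 'v => 'v => int option:
  G u v = None means uv is not an edge, G u v = Some s means uv is an edge of sign s (s = 1 or -1).\<close>

definition sq :: "'a::field \<Rightarrow> int" where
  "sq x = (if \<exists>y. y * y = x then 1 else -1)"

definition SP :: "'a::field \<Rightarrow> 'a \<Rightarrow> int option" where
  "SP x y = (if x = y then None else Some (sq (y - x)))"

text \<open>SP_q^+: add a vertex infinity (represented by None) joined positively to everything.\<close>
fun SPplus :: "'a::field option \<Rightarrow> 'a option \<Rightarrow> int option" where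
  "SPplus None None = None"
| "SPplus None (Some v) = Some 1"
| "SPplus (Some u) None = Some 1"
| "SPplus (Some u) (Some v) = SP u v"

text \<open>Antitwinned graph AT(H): vertices (u,i) with i :: bool standing for index 0/1.\<close>
definition AT :: "('v \<Rightarrow> 'v \<Rightarrow> int option) \<Rightarrow> ('v \<times> bool) \<Rightarrow> ('v \<times> bool) \<Rightarrow> int option" where
  "AT H x y = map_option (\<lambda>s. if snd x = snd y then s else - s) (H (fst x) (fst y))"

definition Tr :: "('a::field option \<times> bool) \<Rightarrow> ('a option \<times> bool) \<Rightarrow> int option" where
  "Tr = AT SPplus"

definition successors :: "('v \<Rightarrow> 'v \<Rightarrow> int option) \<Rightarrow> 'v list \<Rightarrow> int list \<Rightarrow> 'v set" where
  "successors G X \<alpha> = {u. \<forall>i < length X. G u (X ! i) = Some (\<alpha> ! i)}"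

text \<open>Property P(k,l) (the vertex set is the whole finite vertex type; l is an integer).\<close>
definition propP :: "('v \<Rightarrow> 'v \<Rightarrow> int option) \<Rightarrow> nat \<Rightarrow> int \<Rightarrow> bool" where
  "propP G k l = (\<forall>X \<alpha>. length X = k \<and> distinct X
      \<and> (\<forall>i<k. \<forall>j<k. i \<noteq> j \<longrightarrow> G (X ! i) (X ! j) \<noteq> None)
      \<and> length \<alpha> = k \<and> set \<alpha> \<subseteq> {1, -1}
      \<longrightarrow> int (card (successors G X \<alpha>)) \<ge> l)"

end

theory Submission
  imports Defs "HOL-Library.Z2" "HOL-Library.Disjoint_Sets"
begin

(* Write q for the order of the field and sq for its quadratic character.
   A successor u of a sequence X = (a, b, c, ...) with signs alpha is a vertex with
   sq(a - u) = alpha_1, sq(b - u) = alpha_2, ...; writing the indicator of such a sign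
   pattern as a product of terms (1 + alpha_i sq(a_i - u)) / 2 and summing over u reduces
   every successor count to character sums.  Only two of them are needed: the sum of sq over
   the nonzero elements is 0, and the Jacobi-type sum of sq(a - u) sq(b - u) over u not in
   {a, b} is -1.
   Both hold in every field of odd order, which is all the proof uses of q = 1 (mod 4). *)


section \<open>Signed cliques and successors\<close>

definition signed_clique :: "('v \<Rightarrow> 'v \<Rightarrow> int option) \<Rightarrow> nat \<Rightarrow> 'v list \<Rightarrow> int list \<Rightarrow> bool" where
  "signed_clique G k X \<alpha> \<longleftrightarrow> length X = k \<and> distinct X
      \<and> (\<forall>i<k. \<forall>j<k. i \<noteq> j \<longrightarrow> G (X ! i) (X ! j) \<noteq> None)
      \<and> length \<alpha> = k \<and> set \<alpha> \<subseteq> {1, -1}"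

lemma propP_iff:
  "propP G k l \<longleftrightarrow> (\<forall>X \<alpha>. signed_clique G k X \<alpha> \<longrightarrow> l \<le> int (card (successors G X \<alpha>)))"
  by (auto simp: propP_def signed_clique_def)

lemma signed_clique_iff:
  "signed_clique G k X \<alpha> \<longleftrightarrow> length X = k \<and> distinct X
      \<and> (\<forall>x\<in>set X. \<forall>y\<in>set X. x \<noteq> y \<longrightarrow> G x y \<noteq> None)
      \<and> length \<alpha> = k \<and> set \<alpha> \<subseteq> {1, -1}"
proof -
  have "(\<forall>i<length X. \<forall>j<length X. i \<noteq> j \<longrightarrow> G (X ! i) (X ! j) \<noteq> None)
        \<longleftrightarrow> (\<forall>x\<in>set X. \<forall>y\<in>set X. x \<noteq> y \<longrightarrow> G x y \<noteq> None)" if "distinct X"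
    using that by (metis in_set_conv_nth nth_eq_iff_index_eq)
  then show ?thesis
    unfolding signed_clique_def by blast
qed

lemma successors_Nil [simp]: "successors G [] \<alpha> = UNIV"
  by (simp add: successors_def)

lemma successors_Cons [simp]:
  "successors G (x # X) (e # \<alpha>) = {u. G u x = Some e} \<inter> successors G X \<alpha>"
  by (auto simp: successors_def less_Suc_eq_0_disj)

lemma successors_append:
  "length X\<^sub>1 = length \<alpha>\<^sub>1 \<Longrightarrow>
   successors G (X\<^sub>1 @ X\<^sub>2) (\<alpha>\<^sub>1 @ \<alpha>\<^sub>2) = successors G X\<^sub>1 \<alpha>\<^sub>1 \<inter> successors G X\<^sub>2 \<alpha>\<^sub>2"
  by (induction X\<^sub>1 \<alpha>\<^sub>1 rule: list_induct2) (auto simp: Int_assoc)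

lemma signed_clique_0E:
  assumes "signed_clique G 0 X \<alpha>"
  obtains "X = []" "\<alpha> = []"
  using assms by (simp add: signed_clique_def)

lemma signed_clique_1E:
  assumes "signed_clique G 1 X \<alpha>"
  obtains a e where "X = [a]" "\<alpha> = [e]" "e = 1 \<or> e = -1"
  using assms by (auto simp: signed_clique_def length_Suc_conv)

lemma signed_clique_2E:
  assumes "signed_clique G 2 X \<alpha>"
  obtains a b e\<^sub>1 e\<^sub>2 where "X = [a, b]" "\<alpha> = [e\<^sub>1, e\<^sub>2]" "a \<noteq> b"
    "e\<^sub>1 = 1 \<or> e\<^sub>1 = -1" "e\<^sub>2 = 1 \<or> e\<^sub>2 = -1"
  using assms by (auto simp: signed_clique_def length_Suc_conv numeral_2_eq_2)

lemma signed_clique_3E: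
  assumes "signed_clique G 3 X \<alpha>"
  obtains a b c e\<^sub>1 e\<^sub>2 e\<^sub>3 where "X = [a, b, c]" "\<alpha> = [e\<^sub>1, e\<^sub>2, e\<^sub>3]" "a \<noteq> b" "a \<noteq> c" "b \<noteq> c"
    "e\<^sub>1 = 1 \<or> e\<^sub>1 = -1" "e\<^sub>2 = 1 \<or> e\<^sub>2 = -1" "e\<^sub>3 = 1 \<or> e\<^sub>3 = -1"
  using assms by (auto simp: signed_clique_def length_Suc_conv numeral_3_eq_3)

lemma propP_0: "propP (G :: 'v::finite \<Rightarrow> 'v \<Rightarrow> int option) 0 (int (card (UNIV :: 'v set)))"
  unfolding propP_iff by (auto elim: signed_clique_0E)


section \<open>Antitwinned graphs\<close>

text \<open>The property satisfied by a graph H when AT(H) has property P(k,l): every signed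
  k-clique of H has at least l successors for alpha and for -alpha together.\<close>

definition propP_antipodal :: "('v \<Rightarrow> 'v \<Rightarrow> int option) \<Rightarrow> nat \<Rightarrow> int \<Rightarrow> bool" where
  "propP_antipodal G k l \<longleftrightarrow> (\<forall>X \<alpha>. signed_clique G k X \<alpha> \<longrightarrow>
      l \<le> int (card (successors G X \<alpha>)) + int (card (successors G X (map uminus \<alpha>))))"

lemma AT_eq_Some:
  "AT H (w, b) x = Some e \<longleftrightarrow> H w (fst x) = Some (if b = snd x then e else - e)"
  by (cases "H w (fst x)") (auto simp: AT_def)

lemma AT_successors_twin:
  "length X = length \<alpha> \<Longrightarrow> (w, b) \<in> successors (AT H) X \<alpha>
     \<longleftrightarrow> w \<in> successors H (map fst X) (map2 (\<lambda>x e. if b = snd x then e else - e) X \<alpha>)"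
  by (induction X \<alpha> rule: list_induct2) (auto simp: AT_eq_Some)

lemma card_AT_successors:
  fixes H :: "'v::finite \<Rightarrow> 'v \<Rightarrow> int option"
  assumes "length X = length \<alpha>"
  defines "\<beta> \<equiv> map2 (\<lambda>x e. if snd x then e else - e) X \<alpha>"
  shows "card (successors (AT H) X \<alpha>)
       = card (successors H (map fst X) \<beta>) + card (successors H (map fst X) (map uminus \<beta>))"
proof -
  have signs_False: "map2 (\<lambda>x e. if \<not> snd x then e else - e) X \<alpha> = map uminus \<beta>"
    by (auto simp: \<beta>_def map_zip_map2 split: prod.splits)
  have split: "successors (AT H) X \<alpha> = (\<lambda>w. (w, True)) ` successors H (map fst X) \<beta>
                                   \<union> (\<lambda>w. (w, False)) ` successors H (map fst X) (map uminus \<beta>)"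
  proof (rule set_eqI)
    fix z :: "'v \<times> bool"
    obtain w b where z: "z = (w, b)" by fastforce
    show "z \<in> successors (AT H) X \<alpha> \<longleftrightarrow> z \<in> (\<lambda>w. (w, True)) ` successors H (map fst X) \<beta>
                                   \<union> (\<lambda>w. (w, False)) ` successors H (map fst X) (map uminus \<beta>)"
      unfolding z AT_successors_twin[OF assms(1)]
      by (cases b) (auto simp: \<beta>_def signs_False image_iff)
  qed
  have card_twins: "card ((\<lambda>w. (w, b)) ` S) = card S" for b and S :: "'v set"
    by (rule card_image) (simp add: inj_on_def)
  show ?thesis
    unfolding split by (subst card_Un_disjoint) (auto simp: card_twins)
qed

text \<open>For an irreflexive graph H the shadow of a clique of AT(H) is a clique of H, so the
  antipodal property of H yields property P for AT(H).\<close>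

lemma propP_AT:
  fixes H :: "'v::finite \<Rightarrow> 'v \<Rightarrow> int option"
  assumes irrefl: "\<And>v. H v v = None" and bound: "propP_antipodal H k l"
  shows "propP (AT H) k l"
  unfolding propP_iff
proof (intro allI impI)
  fix X \<alpha> assume clique: "signed_clique (AT H) k X \<alpha>"
  define \<beta> where "\<beta> = map2 (\<lambda>x e. if snd x then e else - e) X \<alpha>"
  have adjacent: "H (fst x) (fst y) \<noteq> None" if "x \<in> set X" "y \<in> set X" "x \<noteq> y" for x y
    using clique that by (auto simp: signed_clique_iff AT_def)
  have "inj_on fst (set X)"
    using adjacent irrefl by (metis inj_onI)
  then have "distinct (map fst X)"
    using clique by (simp add: signed_clique_def distinct_map)
  moreover have "set \<beta> \<subseteq> {1, -1}"
    using clique by (fastforce simp: \<beta>_def signed_clique_def dest: set_zip_rightD)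
  ultimately have "signed_clique H k (map fst X) \<beta>"
    using clique adjacent by (auto simp: signed_clique_iff \<beta>_def)
  then have "l \<le> int (card (successors H (map fst X) \<beta>)) + int (card (successors H (map fst X) (map uminus \<beta>)))"
    using bound by (simp add: propP_antipodal_def)
  also have "\<dots> = int (card (successors (AT H) X \<alpha>))"
    using clique card_AT_successors[of X \<alpha> H] by (simp add: signed_clique_def \<beta>_def)
  finally show "l \<le> int (card (successors (AT H) X \<alpha>))" .
qed


section \<open>Adding the vertex infinity\<close>

text \<open>Neither graph has loops; this is what makes the shadow of a clique of an antitwinned
  graph a clique again.\<close>

lemma SP_irreflexive: "SP v v = None"
  by (simp add: SP_def)

lemma SPplus_irreflexive: "SPplus v v = None"
  by (cases v) (simp_all add: SP_irreflexive)

lemma Some_in_SPplus_successors: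
  "Some w \<in> successors SPplus (map Some X) \<alpha> \<longleftrightarrow> w \<in> successors SP X \<alpha>"
  by (simp add: successors_def)

lemma None_in_SPplus_successors:
  "length X = length \<alpha> \<Longrightarrow> None \<in> successors SPplus (map Some X) \<alpha> \<longleftrightarrow> set \<alpha> \<subseteq> {1}"
  unfolding successors_def by (simp add: subset_code(1) all_set_conv_all_nth)

lemma card_SPplus_successors_finite:
  fixes X :: "'a::{finite,field} list"
  assumes "length X = length \<alpha>"
  shows "card (successors SPplus (map Some X) \<alpha>)
       = card (successors SP X \<alpha>) + (if set \<alpha> \<subseteq> {1} then 1 else 0)"
proof -
  have "successors SPplus (map Some X) \<alpha>
      = Some ` successors SP X \<alpha> \<union> (if set \<alpha> \<subseteq> {1} then {None} else {})"
  proof (rule set_eqI)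
    fix W :: "'a option"
    show "W \<in> successors SPplus (map Some X) \<alpha>
        \<longleftrightarrow> W \<in> Some ` successors SP X \<alpha> \<union> (if set \<alpha> \<subseteq> {1} then {None} else {})"
      by (cases W) (auto simp: Some_in_SPplus_successors None_in_SPplus_successors[OF assms])
  qed
  then show ?thesis
    by (simp add: card_image)
qed

lemma SPplus_successors_infinity:
  fixes X\<^sub>1 X\<^sub>2 :: "'a::field list"
  assumes "length X\<^sub>1 = length \<alpha>\<^sub>1"
  shows "successors SPplus (map Some X\<^sub>1 @ None # map Some X\<^sub>2) (\<alpha>\<^sub>1 @ e # \<alpha>\<^sub>2)
       = (if e = 1 then Some ` successors SP (X\<^sub>1 @ X\<^sub>2) (\<alpha>\<^sub>1 @ \<alpha>\<^sub>2) else {})"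
proof (rule set_eqI)
  fix W :: "'a option"
  show "W \<in> successors SPplus (map Some X\<^sub>1 @ None # map Some X\<^sub>2) (\<alpha>\<^sub>1 @ e # \<alpha>\<^sub>2)
      \<longleftrightarrow> W \<in> (if e = 1 then Some ` successors SP (X\<^sub>1 @ X\<^sub>2) (\<alpha>\<^sub>1 @ \<alpha>\<^sub>2) else {})"
    using assms by (cases W) (auto simp: successors_append Some_in_SPplus_successors)
qed

lemma map_Some_the: "None \<notin> set Y \<Longrightarrow> map Some (map the Y) = Y"
  by (induction Y) auto

lemma SPplus_clique_adjacent:
  assumes "signed_clique SPplus k Y \<beta>" and "Some x \<in> set Y" "Some y \<in> set Y" "x \<noteq> y"
  shows "SP x y \<noteq> None"
proof -
  have "\<forall>u\<in>set Y. \<forall>v\<in>set Y. u \<noteq> v \<longrightarrow> SPplus u v \<noteq> None"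
    using assms(1) unfolding signed_clique_iff by blast
  then show ?thesis
    using assms(2-4) by fastforce
qed

lemma SPplus_clique_avoiding_infinity:
  assumes clique: "signed_clique (SPplus :: 'a::field option \<Rightarrow> _) k Y \<beta>" and "None \<notin> set Y"
  obtains X where "Y = map Some X" and "signed_clique SP k X \<beta>"
proof -
  define X where "X = map the Y"
  have Y: "Y = map Some X"
    using map_Some_the[OF assms(2)] by (simp add: X_def)
  have "signed_clique SP k X \<beta>"
    using clique SPplus_clique_adjacent[OF clique] unfolding Y
    by (auto simp: signed_clique_iff distinct_map)
  with Y show ?thesis
    by (rule that)
qed

text \<open>Removing infinity from a signed clique through it leaves a (k-1)-clique of SP_q, whose
  successors (for the signs normalised so that infinity gets +) are exactly the successors of
  the original clique for alpha and -alpha together.\<close>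

lemma SPplus_clique_through_infinity:
  assumes clique: "signed_clique (SPplus :: 'a::{finite,field} option \<Rightarrow> _) k Y \<beta>" and "None \<in> set Y"
  obtains X \<gamma> where "signed_clique (SP :: 'a \<Rightarrow> _) (k - 1) X \<gamma>"
    and "int (card (successors SPplus Y \<beta>)) + int (card (successors SPplus Y (map uminus \<beta>)))
         = int (card (successors SP X \<gamma>))"
proof -
  obtain Y\<^sub>1 Y\<^sub>2 where Y: "Y = Y\<^sub>1 @ None # Y\<^sub>2"
    using assms(2) by (meson split_list)
  define X\<^sub>1 X\<^sub>2 where "X\<^sub>1 = map the Y\<^sub>1" and "X\<^sub>2 = map the Y\<^sub>2"
  have finite_sides: "None \<notin> set Y\<^sub>1" "None \<notin> set Y\<^sub>2"
    using clique by (auto simp: signed_clique_def Y)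
  have Y_Some: "Y = map Some X\<^sub>1 @ None # map Some X\<^sub>2"
    unfolding Y X\<^sub>1_def X\<^sub>2_def map_Some_the[OF finite_sides(1)] map_Some_the[OF finite_sides(2)] ..
  define \<beta>\<^sub>1 e \<beta>\<^sub>2 where "\<beta>\<^sub>1 = take (length Y\<^sub>1) \<beta>" and "e = \<beta> ! length Y\<^sub>1"
    and "\<beta>\<^sub>2 = drop (Suc (length Y\<^sub>1)) \<beta>"
  have "length \<beta> = length Y"
    using clique by (simp add: signed_clique_def)
  then have \<beta>: "\<beta> = \<beta>\<^sub>1 @ e # \<beta>\<^sub>2" and len: "length X\<^sub>1 = length \<beta>\<^sub>1"
    by (simp_all add: \<beta>\<^sub>1_def e_def \<beta>\<^sub>2_def Y X\<^sub>1_def id_take_nth_drop)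
  have e: "e = 1 \<or> e = -1"
    using clique by (auto simp: signed_clique_def \<beta>)
  define \<gamma> where "\<gamma> = (if e = 1 then \<beta>\<^sub>1 @ \<beta>\<^sub>2 else map uminus (\<beta>\<^sub>1 @ \<beta>\<^sub>2))"
  have "signed_clique SP (k - 1) (X\<^sub>1 @ X\<^sub>2) \<gamma>"
    using clique SPplus_clique_adjacent[OF clique] e
    by (auto simp: signed_clique_iff Y_Some \<beta> \<gamma>_def distinct_map)
  moreover have "int (card (successors SPplus Y \<beta>)) + int (card (successors SPplus Y (map uminus \<beta>)))
      = int (card (successors SP (X\<^sub>1 @ X\<^sub>2) \<gamma>))"
    using e len by (auto simp: Y_Some \<beta> \<gamma>_def SPplus_successors_infinity card_image)
  ultimately show ?thesis
    by (rule that)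
qed

lemma propP_antipodal_SPplus:
  fixes l :: int
  assumes through_infinity: "propP (SP :: 'a::{finite,field} \<Rightarrow> _) (k - 1) l"
    and avoiding_infinity: "\<And>X \<alpha>. signed_clique (SP :: 'a \<Rightarrow> _) k X \<alpha> \<Longrightarrow>
       l \<le> int (card (successors SP X \<alpha>)) + int (card (successors SP X (map uminus \<alpha>)))
            + (if set \<alpha> \<subseteq> {1} then 1 else 0) + (if set \<alpha> \<subseteq> {-1} then 1 else 0)"
  shows "propP_antipodal (SPplus :: 'a option \<Rightarrow> _) k l"
  unfolding propP_antipodal_def
proof (intro allI impI)
  fix Y :: "'a option list" and \<beta> :: "int list"
  assume clique: "signed_clique SPplus k Y \<beta>"
  show "l \<le> int (card (successors SPplus Y \<beta>)) + int (card (successors SPplus Y (map uminus \<beta>)))"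
  proof (cases "None \<in> set Y")
    case False
    then obtain X where Y: "Y = map Some X" and clique_X: "signed_clique SP k X \<beta>"
      using SPplus_clique_avoiding_infinity[OF clique] by blast
    have "uminus ` set \<beta> \<subseteq> {1} \<longleftrightarrow> set \<beta> \<subseteq> {-1}"
      by auto
    then have "int (card (successors SPplus Y \<beta>)) + int (card (successors SPplus Y (map uminus \<beta>)))
        = int (card (successors SP X \<beta>)) + int (card (successors SP X (map uminus \<beta>)))
          + (if set \<beta> \<subseteq> {1} then 1 else 0) + (if set \<beta> \<subseteq> {-1} then 1 else 0)"
      using clique_X by (simp add: Y card_SPplus_successors_finite signed_clique_def)
    then show ?thesis
      using avoiding_infinity[OF clique_X] by linarith
  next
    case True
    then show ?thesis
      using SPplus_clique_through_infinity[OF clique] through_infinity by (metis propP_iff)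
  qed
qed


section \<open>The quadratic character of a finite field of odd order\<close>

text \<open>A fixed-point-free involution pairs up the elements of a finite set (counted here in
  the two-element field).\<close>

lemma even_card_involution:
  assumes "finite U" and "\<And>x. x \<in> U \<Longrightarrow> h x \<in> U" and "\<And>x. x \<in> U \<Longrightarrow> h (h x) = x"
    and "\<And>x. x \<in> U \<Longrightarrow> h x \<noteq> x"
  shows "even (card U)"
proof -
  have "(\<Sum>x\<in>U. 1 :: bit) = 0"
    by (rule sum_involution_eq_0[where h = h]) (use assms in auto)
  then have "even (of_nat (card U) :: bit)"
    by simp
  then show ?thesis
    by (simp only: even_of_nat_iff)
qed

text \<open>In characteristic 2 the translation by 1 is a fixed-point-free involution.\<close>

lemma two_neq_zero:
  assumes "odd (card (UNIV :: 'a::{finite,field} set))"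
  shows "(2::'a) \<noteq> 0"
proof
  assume char2: "(2::'a) = 0"
  have "even (card (UNIV :: 'a set))"
    by (rule even_card_involution[where h = "\<lambda>x. x + 1"])
      (simp_all add: add.assoc char2 flip: one_add_one)
  with assms show False
    by simp
qed

text \<open>Basic facts on the quadratic character sq (which takes the value 1 also at 0).\<close>

lemma sq_cases: "sq x = 1 \<or> sq x = -1"
  by (simp add: sq_def)

lemma sq_eq_1_iff: "sq x = 1 \<longleftrightarrow> (\<exists>y. y * y = x)"
  by (simp add: sq_def)

lemma sq_1: "sq (1::'a::field) = 1"
  by (metis mult_1 sq_eq_1_iff)

lemma sq_mult_square:
  assumes "(r::'a::field) \<noteq> 0"
  shows "sq (r * r * y) = sq y"
proof -
  have "(\<exists>t. t * t = r * r * y) \<longleftrightarrow> (\<exists>t. t * t = y)"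
  proof
    assume "\<exists>t. t * t = r * r * y"
    then obtain t where "t * t = r * r * y" by blast
    then have "(t / r) * (t / r) = y"
      using assms by (simp add: field_simps)
    then show "\<exists>t. t * t = y" by blast
  next
    assume "\<exists>t. t * t = y"
    then obtain t where "t * t = y" by blast
    then have "(r * t) * (r * t) = r * r * y"
      by (simp add: algebra_simps)
    then show "\<exists>t. t * t = r * r * y" by blast
  qed
  then show ?thesis
    by (simp add: sq_def)
qed

lemma sq_inverse: "sq (inverse (x::'a::field)) = sq x"
proof -
  have "(\<exists>y. y * y = inverse x) \<longleftrightarrow> (\<exists>y. y * y = x)"
  proof
    assume "\<exists>y. y * y = inverse x"
    then obtain y where "y * y = inverse x" by blast
    then have "inverse y * inverse y = x"
      by (simp flip: inverse_mult_distrib)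
    then show "\<exists>y. y * y = x" by blast
  next
    assume "\<exists>y. y * y = x"
    then obtain y where "y * y = x" by blast
    then have "inverse y * inverse y = inverse x"
      by (simp flip: inverse_mult_distrib)
    then show "\<exists>y. y * y = inverse x" by blast
  qed
  then show ?thesis
    by (simp add: sq_def)
qed

text \<open>In a field of odd order squaring is two-to-one on the nonzero elements (t and -t are
  distinct), so exactly half of them are squares.\<close>

lemma card_nonzero_squares:
  assumes odd: "odd (card (UNIV :: 'a::{finite,field} set))"
  shows "2 * card {x::'a. x \<noteq> 0 \<and> sq x = 1} = card (UNIV :: 'a set) - 1"
proof -
  let ?Q = "{x::'a. x \<noteq> 0 \<and> sq x = 1}"
  have roots: "{r. r * r = s} = {t, - t}" if "t * t = s" for s t :: 'a
    using that by (auto simp: square_eq_iff)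
  have two_roots: "card {r. r * r = s} = 2" if "s \<in> ?Q" for s
  proof -
    obtain t where t: "t * t = s" "t \<noteq> 0"
      using \<open>s \<in> ?Q\<close> by (auto simp: sq_eq_1_iff)
    have "t \<noteq> - t"
    proof
      assume "t = - t"
      then have "2 * t = 0" by simp
      with t(2) two_neq_zero[OF odd] show False by simp
    qed
    then show ?thesis
      using roots[OF t(1)] by simp
  qed
  have fibres: "UNIV - {0} = (\<Union>s\<in>?Q. {r::'a. r * r = s})"
    by (auto simp: sq_eq_1_iff)
  have "card (UNIV - {0::'a}) = (\<Sum>s\<in>?Q. card {r::'a. r * r = s})"
    unfolding fibres by (rule card_UN_disjoint) auto
  also have "\<dots> = 2 * card ?Q"
    using two_roots by simp
  finally show ?thesis
    by simp
qed

lemma card_nonzero_nonsquares: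
  assumes "odd (card (UNIV :: 'a::{finite,field} set))"
  shows "card {x::'a. x \<noteq> 0 \<and> sq x = -1} = card {x::'a. x \<noteq> 0 \<and> sq x = 1}"
proof -
  have "UNIV - {0::'a} = {x. x \<noteq> 0 \<and> sq x = 1} \<union> {x. x \<noteq> 0 \<and> sq x = -1}"
    using sq_cases by auto
  then have "card (UNIV - {0::'a}) = card {x::'a. x \<noteq> 0 \<and> sq x = 1} + card {x::'a. x \<noteq> 0 \<and> sq x = -1}"
    by (simp add: card_Un_disjoint disjoint_iff)
  then show ?thesis
    using card_nonzero_squares[OF assms] by simp
qed

text \<open>Multiplication by a nonsquare maps the nonzero squares injectively, hence (equal
  cardinalities) bijectively, onto the nonsquares; so the quadratic character is multiplicative.\<close>

lemma sq_mult:
  assumes odd: "odd (card (UNIV :: 'a::{finite,field} set))"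
    and x: "(x::'a) \<noteq> 0" and y: "y \<noteq> 0"
  shows "sq (x * y) = sq x * sq y"
proof -
  have square_factor: "sq (x * y) = sq y" if "sq x = 1" "x \<noteq> 0" for x y :: 'a
    using that sq_mult_square[of _ y] by (auto simp: sq_eq_1_iff)
  consider "sq x = 1" | "sq y = 1" | "sq x = -1" "sq y = -1"
    using sq_cases by blast
  then show ?thesis
  proof cases
    case 1
    then show ?thesis using square_factor x by simp
  next
    case 2
    then show ?thesis using square_factor[of y x] y by (simp add: mult.commute)
  next
    case 3
    let ?Q = "{s::'a. s \<noteq> 0 \<and> sq s = 1}" and ?N = "{s::'a. s \<noteq> 0 \<and> sq s = -1}"
    have "(\<lambda>s. s * x) ` ?Q \<subseteq> ?N"
      using square_factor 3(1) x by auto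
    moreover have "card ((\<lambda>s. s * x) ` ?Q) = card ?N"
      using x card_nonzero_nonsquares[OF odd] by (simp add: card_image inj_on_def)
    ultimately have "(\<lambda>s. s * x) ` ?Q = ?N"
      by (intro card_subset_eq) auto
    moreover have "y \<in> ?N"
      using y 3(2) by simp
    ultimately obtain s where s: "s \<in> ?Q" "y = s * x"
      by blast
    have "sq (x * x) = 1"
      using sq_mult_square[OF x, of 1] sq_1 by simp
    then have "sq (x * y) = 1"
      using square_factor[of s "x * x"] s by (simp add: ac_simps)
    with 3 show ?thesis
      by simp
  qed
qed

lemma sum_sq_nonzero:
  assumes "odd (card (UNIV :: 'a::{finite,field} set))"
  shows "(\<Sum>x\<in>UNIV - {0::'a}. sq x) = 0"
proof -
  let ?Q = "{x::'a. x \<noteq> 0 \<and> sq x = 1}" and ?N = "{x::'a. x \<noteq> 0 \<and> sq x = -1}"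
  have split: "UNIV - {0::'a} = ?Q \<union> ?N"
    using sq_cases by auto
  have "(\<Sum>x\<in>UNIV - {0::'a}. sq x) = (\<Sum>x\<in>?Q. sq x) + (\<Sum>x\<in>?N. sq x)"
    unfolding split by (rule sum.union_disjoint) auto
  also have "\<dots> = (\<Sum>x\<in>?Q. 1) + (\<Sum>x\<in>?N. -1)"
    by (intro arg_cong2[where f = "(+)"] sum.cong) auto
  also have "\<dots> = 0"
    using card_nonzero_nonsquares[OF assms] by simp
  finally show ?thesis .
qed

lemma sum_sq_translate:
  assumes "odd (card (UNIV :: 'a::{finite,field} set))"
  shows "(\<Sum>u\<in>UNIV - {a::'a}. sq (a - u)) = 0"
proof -
  have "(\<Sum>u\<in>UNIV - {a::'a}. sq (a - u)) = (\<Sum>x\<in>UNIV - {0::'a}. sq x)"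
    by (rule sum.reindex_bij_witness[where i = "\<lambda>x. a - x" and j = "\<lambda>u. a - u"]) auto
  then show ?thesis
    using sum_sq_nonzero[OF assms] by simp
qed

lemma sum_sq_except_0_1:
  assumes "odd (card (UNIV :: 'a::{finite,field} set))"
  shows "(\<Sum>y\<in>UNIV - {0, 1::'a}. sq y) = -1"
proof -
  have "UNIV - {0::'a} = insert 1 (UNIV - {0, 1})"
    by auto
  then have "(\<Sum>y\<in>UNIV - {0::'a}. sq y) = sq (1::'a) + (\<Sum>y\<in>UNIV - {0, 1::'a}. sq y)"
    by simp
  then show ?thesis
    using sum_sq_nonzero[OF assms] sq_1[where 'a = 'a] by simp
qed

text \<open>The Jacobi-type sum: the substitution y = (a - u) / (b - u) is a bijection from the
  field minus {a, b} onto the field minus {0, 1}, and sq y = sq (a - u) sq (b - u).\<close>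

lemma sum_sq_two_points:
  assumes odd: "odd (card (UNIV :: 'a::{finite,field} set))" and ab: "(a::'a) \<noteq> b"
  shows "(\<Sum>u\<in>UNIV - {a, b}. sq (a - u) * sq (b - u)) = -1"
proof -
  have "(\<Sum>u\<in>UNIV - {a, b}. sq (a - u) * sq (b - u)) = (\<Sum>y\<in>UNIV - {0, 1::'a}. sq y)"
  proof (rule sum.reindex_bij_witness[where i = "\<lambda>y. (a - y * b) / (1 - y)" and j = "\<lambda>u. (a - u) / (b - u)"])
    fix u assume "u \<in> UNIV - {a, b}"
    then have au: "a - u \<noteq> 0" and bu: "b - u \<noteq> 0" by auto
    have num: "a - (a - u) / (b - u) * b = u * (b - a) / (b - u)" and
      den: "1 - (a - u) / (b - u) = (b - a) / (b - u)"
      using bu by (simp_all add: field_simps)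
    show "(a - (a - u) / (b - u) * b) / (1 - (a - u) / (b - u)) = u"
      unfolding num den using ab bu by simp
    show "(a - u) / (b - u) \<in> UNIV - {0, 1}"
      using au bu ab by (auto simp: field_simps)
    show "sq ((a - u) / (b - u)) = sq (a - u) * sq (b - u)"
      using sq_mult[OF odd au, of "inverse (b - u)"] bu by (simp add: divide_inverse sq_inverse)
  next
    fix y :: 'a assume "y \<in> UNIV - {0, 1}"
    then have y0: "y \<noteq> 0" and y1: "1 - y \<noteq> 0" by auto
    have ba: "b - a \<noteq> 0" using ab by simp
    have au: "a - (a - y * b) / (1 - y) = y * (b - a) / (1 - y)" and
      bu: "b - (a - y * b) / (1 - y) = (b - a) / (1 - y)"
      using y1 by (simp_all add: field_simps)
    show "(a - (a - y * b) / (1 - y)) / (b - (a - y * b) / (1 - y)) = y"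
      unfolding au bu using ba y1 by simp
    show "(a - y * b) / (1 - y) \<in> UNIV - {a, b}"
      using au bu y0 y1 ba by auto
  qed
  then show ?thesis
    using sum_sq_except_0_1[OF odd] by simp
qed


section \<open>Counting sign patterns\<close>

text \<open>For plus-minus-one valued f and g the indicator of f = e1, g = e2 is
  (1 + e1 f)(1 + e2 g) / 4; summing it counts the points with this sign pattern.\<close>

lemma card_sign_pattern:
  fixes f g :: "'x \<Rightarrow> int"
  assumes A: "finite A"
    and f: "\<And>x. x \<in> A \<Longrightarrow> f x = 1 \<or> f x = -1" and g: "\<And>x. x \<in> A \<Longrightarrow> g x = 1 \<or> g x = -1"
    and e\<^sub>1: "e\<^sub>1 = 1 \<or> e\<^sub>1 = -1" and e\<^sub>2: "e\<^sub>2 = 1 \<or> e\<^sub>2 = -1"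
  shows "4 * int (card {x\<in>A. f x = e\<^sub>1 \<and> g x = e\<^sub>2})
       = int (card A) + e\<^sub>1 * sum f A + e\<^sub>2 * sum g A + e\<^sub>1 * e\<^sub>2 * (\<Sum>x\<in>A. f x * g x)"
proof -
  have "4 * int (card {x\<in>A. f x = e\<^sub>1 \<and> g x = e\<^sub>2}) = (\<Sum>x\<in>A. if f x = e\<^sub>1 \<and> g x = e\<^sub>2 then 4 else 0)"
    using A by (simp add: sum.If_cases Int_def)
  also have "\<dots> = (\<Sum>x\<in>A. 1 + e\<^sub>1 * f x + e\<^sub>2 * g x + e\<^sub>1 * e\<^sub>2 * (f x * g x))"
  proof (rule sum.cong)
    fix x assume "x \<in> A"
    then have "f x = 1 \<or> f x = -1" "g x = 1 \<or> g x = -1"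
      using f g by blast+
    then show "(if f x = e\<^sub>1 \<and> g x = e\<^sub>2 then 4 else 0) = 1 + e\<^sub>1 * f x + e\<^sub>2 * g x + e\<^sub>1 * e\<^sub>2 * (f x * g x)"
      using e\<^sub>1 e\<^sub>2 by (elim disjE) auto
  qed simp
  also have "\<dots> = int (card A) + e\<^sub>1 * sum f A + e\<^sub>2 * sum g A + e\<^sub>1 * e\<^sub>2 * (\<Sum>x\<in>A. f x * g x)"
    by (simp add: sum.distrib sum_distrib_left)
  finally show ?thesis .
qed

lemma card_sign_value:
  fixes f :: "'x \<Rightarrow> int"
  assumes "finite A" and "\<And>x. x \<in> A \<Longrightarrow> f x = 1 \<or> f x = -1" and "e = 1 \<or> e = -1"
  shows "2 * int (card {x\<in>A. f x = e}) = int (card A) + e * sum f A"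
  using card_sign_pattern[of A f "\<lambda>_. 1" e 1] assms by simp

lemma sign_mult: "x = 1 \<or> x = -1 \<Longrightarrow> y = 1 \<or> y = -1 \<Longrightarrow> x * y = 1 \<or> x * y = (-1::int)"
  by auto

lemma sq_product_cases: "sq x * sq y = 1 \<or> sq x * sq y = -1"
  by (rule sign_mult[OF sq_cases sq_cases])

text \<open>A sign pattern or its negative occurs iff the two products relative to the first entry
  are right; this turns a pair of antipodal three-point counts into one two-function count.\<close>

lemma antipodal_sign_pattern:
  fixes x y z e\<^sub>1 e\<^sub>2 e\<^sub>3 :: int
  assumes "x = 1 \<or> x = -1" "y = 1 \<or> y = -1" "z = 1 \<or> z = -1"
    and "e\<^sub>1 = 1 \<or> e\<^sub>1 = -1" "e\<^sub>2 = 1 \<or> e\<^sub>2 = -1" "e\<^sub>3 = 1 \<or> e\<^sub>3 = -1"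
  shows "((x = e\<^sub>1 \<and> y = e\<^sub>2 \<and> z = e\<^sub>3) \<or> (x = - e\<^sub>1 \<and> y = - e\<^sub>2 \<and> z = - e\<^sub>3))
     \<longleftrightarrow> x * y = e\<^sub>1 * e\<^sub>2 \<and> x * z = e\<^sub>1 * e\<^sub>3"
  using assms by (elim disjE) auto

lemma three_sign_bound:
  fixes p r s e\<^sub>1 e\<^sub>2 e\<^sub>3 :: int
  assumes "p = 1 \<or> p = -1" "r = 1 \<or> r = -1" "s = 1 \<or> s = -1"
    and "e\<^sub>1 = 1 \<or> e\<^sub>1 = -1" "e\<^sub>2 = 1 \<or> e\<^sub>2 = -1" "e\<^sub>3 = 1 \<or> e\<^sub>3 = -1"
  shows "e\<^sub>1 * e\<^sub>2 * (1 + p) + e\<^sub>1 * e\<^sub>3 * (1 + r) + e\<^sub>2 * e\<^sub>3 * (1 + s)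
         \<le> 2 + 4 * (if e\<^sub>1 = e\<^sub>2 \<and> e\<^sub>2 = e\<^sub>3 then 1 else 0)"
  using assms by (elim disjE) auto

lemma div_le_of_le_mult:
  fixes m d c :: int
  assumes "m \<le> d * c" and "0 < d"
  shows "m div d \<le> c"
  using zdiv_mono1[OF assms] assms(2) by simp

lemma sum_remove_point:
  fixes f :: "'a::finite \<Rightarrow> int"
  assumes "c \<notin> B"
  shows "sum f (UNIV - insert c B) = sum f (UNIV - B) - f c"
proof -
  have "UNIV - insert c B = (UNIV - B) - {c}"
    by auto
  then show ?thesis
    using assms by (simp add: sum_diff1)
qed


section \<open>Successor counts in SP_q\<close>

lemma SP_eq_Some: "SP u a = Some e \<longleftrightarrow> u \<noteq> a \<and> sq (a - u) = e"
  by (auto simp: SP_def)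

lemma card_SP_successors_1:
  assumes odd: "odd (card (UNIV :: 'a::{finite,field} set))" and e: "e = 1 \<or> e = -1"
  shows "2 * int (card (successors SP [a::'a] [e])) = int (card (UNIV :: 'a set)) - 1"
proof -
  have "successors SP [a] [e] = {u\<in>UNIV - {a}. sq (a - u) = e}"
    by (auto simp: SP_eq_Some)
  moreover have "2 * int (card {u\<in>UNIV - {a}. sq (a - u) = e})
      = int (card (UNIV - {a})) + e * (\<Sum>u\<in>UNIV - {a}. sq (a - u))"
    by (rule card_sign_value) (use sq_cases e in auto)
  ultimately show ?thesis
    using sum_sq_translate[OF odd, of a] finite_UNIV_card_ge_0[where 'a = 'a]
    by (simp add: card_Diff_subset of_nat_diff)
qed

lemma card_SP_successors_2:
  assumes odd: "odd (card (UNIV :: 'a::{finite,field} set))" and ab: "(a::'a) \<noteq> b"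
    and e\<^sub>1: "e\<^sub>1 = 1 \<or> e\<^sub>1 = -1" and e\<^sub>2: "e\<^sub>2 = 1 \<or> e\<^sub>2 = -1"
  shows "4 * int (card (successors SP [a, b] [e\<^sub>1, e\<^sub>2]))
       = int (card (UNIV :: 'a set)) - 2 - e\<^sub>1 * sq (a - b) - e\<^sub>2 * sq (b - a) - e\<^sub>1 * e\<^sub>2"
proof -
  let ?A = "UNIV - {a, b}"
  have "successors SP [a, b] [e\<^sub>1, e\<^sub>2] = {u\<in>?A. sq (a - u) = e\<^sub>1 \<and> sq (b - u) = e\<^sub>2}"
    by (auto simp: SP_eq_Some)
  moreover have "4 * int (card {u\<in>?A. sq (a - u) = e\<^sub>1 \<and> sq (b - u) = e\<^sub>2})
      = int (card ?A) + e\<^sub>1 * (\<Sum>u\<in>?A. sq (a - u)) + e\<^sub>2 * (\<Sum>u\<in>?A. sq (b - u))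
        + e\<^sub>1 * e\<^sub>2 * (\<Sum>u\<in>?A. sq (a - u) * sq (b - u))"
    by (rule card_sign_pattern) (use sq_cases e\<^sub>1 e\<^sub>2 in auto)
  moreover have "(\<Sum>u\<in>?A. sq (a - u)) = - sq (a - b)"
    using sum_remove_point[of b "{a}" "\<lambda>u. sq (a - u)"] sum_sq_translate[OF odd, of a] ab
    by (simp add: insert_commute)
  moreover have "(\<Sum>u\<in>?A. sq (b - u)) = - sq (b - a)"
    using sum_remove_point[of a "{b}" "\<lambda>u. sq (b - u)"] sum_sq_translate[OF odd, of b] ab
    by simp
  moreover have "int (card ?A) = int (card (UNIV :: 'a set)) - 2"
    using ab card_mono[of "UNIV :: 'a set" "{a, b}"] by (simp add: card_Diff_subset of_nat_diff)
  ultimately show ?thesis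
    using sum_sq_two_points[OF odd ab] by simp
qed

lemma card_SP_successors_3_pair:
  assumes e\<^sub>1: "e\<^sub>1 = 1 \<or> e\<^sub>1 = -1" and e\<^sub>2: "e\<^sub>2 = 1 \<or> e\<^sub>2 = -1" and e\<^sub>3: "e\<^sub>3 = 1 \<or> e\<^sub>3 = -1"
  shows "int (card (successors (SP :: 'a::{finite,field} \<Rightarrow> _) [a, b, c] [e\<^sub>1, e\<^sub>2, e\<^sub>3]))
           + int (card (successors SP [a, b, c] [- e\<^sub>1, - e\<^sub>2, - e\<^sub>3]))
       = int (card {u\<in>UNIV - {a, b, c}. sq (a - u) * sq (b - u) = e\<^sub>1 * e\<^sub>2
                                         \<and> sq (a - u) * sq (c - u) = e\<^sub>1 * e\<^sub>3})"
proof -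
  have union: "successors SP [a, b, c] [e\<^sub>1, e\<^sub>2, e\<^sub>3] \<union> successors SP [a, b, c] [- e\<^sub>1, - e\<^sub>2, - e\<^sub>3]
      = {u\<in>UNIV - {a, b, c}. sq (a - u) * sq (b - u) = e\<^sub>1 * e\<^sub>2 \<and> sq (a - u) * sq (c - u) = e\<^sub>1 * e\<^sub>3}"
    using antipodal_sign_pattern[OF sq_cases sq_cases sq_cases e\<^sub>1 e\<^sub>2 e\<^sub>3] by (auto simp: SP_eq_Some)
  have disjoint: "successors SP [a, b, c] [e\<^sub>1, e\<^sub>2, e\<^sub>3] \<inter> successors SP [a, b, c] [- e\<^sub>1, - e\<^sub>2, - e\<^sub>3] = {}"
    using e\<^sub>1 by auto
  show ?thesis
    unfolding union[symmetric] card_Un_disjoint[OF finite finite disjoint] by simp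
qed

text \<open>For three points only this sum of two counts is determined by the two character sums;
  it is exactly what the antitwinned graphs require.\<close>

lemma card_SP_successors_3_antipodal:
  assumes odd: "odd (card (UNIV :: 'a::{finite,field} set))"
    and ab: "(a::'a) \<noteq> b" and ac: "a \<noteq> c" and bc: "b \<noteq> c"
    and e\<^sub>1: "e\<^sub>1 = 1 \<or> e\<^sub>1 = -1" and e\<^sub>2: "e\<^sub>2 = 1 \<or> e\<^sub>2 = -1" and e\<^sub>3: "e\<^sub>3 = 1 \<or> e\<^sub>3 = -1"
  shows "4 * (int (card (successors SP [a, b, c] [e\<^sub>1, e\<^sub>2, e\<^sub>3]))
              + int (card (successors SP [a, b, c] [- e\<^sub>1, - e\<^sub>2, - e\<^sub>3])))
       = int (card (UNIV :: 'a set)) - 3 - e\<^sub>1 * e\<^sub>2 * (1 + sq (a - c) * sq (b - c))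
         - e\<^sub>1 * e\<^sub>3 * (1 + sq (a - b) * sq (c - b)) - e\<^sub>2 * e\<^sub>3 * (1 + sq (b - a) * sq (c - a))"
proof -
  let ?A = "UNIV - {a, b, c}"
  let ?f = "\<lambda>u. sq (a - u) * sq (b - u)" and ?g = "\<lambda>u. sq (a - u) * sq (c - u)"
  have fg: "?f u * ?g u = sq (b - u) * sq (c - u)" for u
    using sq_cases[of "a - u"] by (auto simp: algebra_simps)
  have "e\<^sub>1 * e\<^sub>2 * (e\<^sub>1 * e\<^sub>3) = e\<^sub>2 * e\<^sub>3"
    using e\<^sub>1 by auto
  moreover have "4 * int (card {u\<in>?A. ?f u = e\<^sub>1 * e\<^sub>2 \<and> ?g u = e\<^sub>1 * e\<^sub>3})
      = int (card ?A) + e\<^sub>1 * e\<^sub>2 * sum ?f ?A + e\<^sub>1 * e\<^sub>3 * sum ?g ?A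
        + e\<^sub>1 * e\<^sub>2 * (e\<^sub>1 * e\<^sub>3) * (\<Sum>u\<in>?A. sq (b - u) * sq (c - u))"
    unfolding fg[symmetric]
    by (rule card_sign_pattern) (simp_all add: sq_product_cases sign_mult e\<^sub>1 e\<^sub>2 e\<^sub>3)
  ultimately have pattern: "4 * int (card {u\<in>?A. ?f u = e\<^sub>1 * e\<^sub>2 \<and> ?g u = e\<^sub>1 * e\<^sub>3})
      = int (card ?A) + e\<^sub>1 * e\<^sub>2 * sum ?f ?A + e\<^sub>1 * e\<^sub>3 * sum ?g ?A
        + e\<^sub>2 * e\<^sub>3 * (\<Sum>u\<in>?A. sq (b - u) * sq (c - u))"
    by simp
  have sum_f: "sum ?f ?A = -1 - sq (a - c) * sq (b - c)"
    using sum_remove_point[of c "{a, b}" ?f] sum_sq_two_points[OF odd ab] ac bc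
    by (simp add: insert_commute)
  have sum_g: "sum ?g ?A = -1 - sq (a - b) * sq (c - b)"
    using sum_remove_point[of b "{a, c}" ?g] sum_sq_two_points[OF odd ac] ab bc
    by (simp add: insert_commute)
  have sum_bc: "(\<Sum>u\<in>?A. sq (b - u) * sq (c - u)) = -1 - sq (b - a) * sq (c - a)"
    using sum_remove_point[of a "{b, c}" "\<lambda>u. sq (b - u) * sq (c - u)"] sum_sq_two_points[OF odd bc] ab ac
    by (simp add: insert_commute)
  have card_A: "int (card ?A) = int (card (UNIV :: 'a set)) - 3"
    using ab ac bc card_mono[of "UNIV :: 'a set" "{a, b, c}"] by (simp add: card_Diff_subset of_nat_diff)
  show ?thesis
    using pattern unfolding card_SP_successors_3_pair[OF e\<^sub>1 e\<^sub>2 e\<^sub>3] sum_f sum_g sum_bc card_A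
    by (simp add: algebra_simps)
qed


section \<open>Part (1): the graph SP_q\<close>

lemma SP_propP_1:
  assumes odd: "odd (card (UNIV :: 'a::{finite,field} set))"
  defines "q \<equiv> int (card (UNIV :: 'a set))"
  shows "propP (SP :: 'a \<Rightarrow> _) 1 ((q - 1) div 2)"
  unfolding propP_iff
proof (intro allI impI)
  fix X \<alpha> assume "signed_clique (SP :: 'a \<Rightarrow> _) 1 X \<alpha>"
  then obtain a e where "X = [a]" "\<alpha> = [e]" "e = 1 \<or> e = -1"
    by (rule signed_clique_1E)
  then show "(q - 1) div 2 \<le> int (card (successors SP X \<alpha>))"
    using card_SP_successors_1[OF odd, of e a] by (simp add: q_def)
qed

lemma SP_propP_2:
  assumes odd: "odd (card (UNIV :: 'a::{finite,field} set))"
  defines "q \<equiv> int (card (UNIV :: 'a set))"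
  shows "propP (SP :: 'a \<Rightarrow> _) 2 ((q - 5) div 4)"
  unfolding propP_iff
proof (intro allI impI)
  fix X \<alpha> assume "signed_clique (SP :: 'a \<Rightarrow> _) 2 X \<alpha>"
  then obtain a b e\<^sub>1 e\<^sub>2 where X: "X = [a, b]" "\<alpha> = [e\<^sub>1, e\<^sub>2]" and ab: "a \<noteq> b"
    and e: "e\<^sub>1 = 1 \<or> e\<^sub>1 = -1" "e\<^sub>2 = 1 \<or> e\<^sub>2 = -1"
    by (rule signed_clique_2E)
  have "q - 5 \<le> 4 * int (card (successors SP X \<alpha>))"
    using card_SP_successors_2[OF odd ab e] sq_cases[of "a - b"] sq_cases[of "b - a"] e
    unfolding X q_def by (elim disjE) auto
  then show "(q - 5) div 4 \<le> int (card (successors SP X \<alpha>))"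
    by (rule div_le_of_le_mult) simp
qed


section \<open>Part (2): the graph Tr(SP_q)\<close>

text \<open>Each part of Tr(SP_q) combines a property of SP_q for one vertex less (cliques through
  infinity) with the antipodal counts for cliques avoiding infinity.\<close>

lemma Tr_propP_1:
  assumes odd: "odd (card (UNIV :: 'a::{finite,field} set))"
  defines "q \<equiv> int (card (UNIV :: 'a set))"
  shows "propP (Tr :: ('a option \<times> bool) \<Rightarrow> _) 1 q"
  unfolding Tr_def
proof (intro propP_AT[OF SPplus_irreflexive] propP_antipodal_SPplus)
  show "propP (SP :: 'a \<Rightarrow> _) (1 - 1) q"
    using propP_0 by (simp add: q_def)
next
  fix X \<alpha> assume "signed_clique (SP :: 'a \<Rightarrow> _) 1 X \<alpha>"
  then obtain a e where "X = [a]" "\<alpha> = [e]" "e = 1 \<or> e = -1"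
    by (rule signed_clique_1E)
  then show "q \<le> int (card (successors SP X \<alpha>)) + int (card (successors SP X (map uminus \<alpha>)))
      + (if set \<alpha> \<subseteq> {1} then 1 else 0) + (if set \<alpha> \<subseteq> {-1} then 1 else 0)"
    using card_SP_successors_1[OF odd, of e a] card_SP_successors_1[OF odd, of "- e" a]
    by (auto simp: q_def)
qed

lemma Tr_propP_2:
  assumes odd: "odd (card (UNIV :: 'a::{finite,field} set))"
  defines "q \<equiv> int (card (UNIV :: 'a set))"
  shows "propP (Tr :: ('a option \<times> bool) \<Rightarrow> _) 2 ((q - 1) div 2)"
  unfolding Tr_def
proof (intro propP_AT[OF SPplus_irreflexive] propP_antipodal_SPplus)
  show "propP (SP :: 'a \<Rightarrow> _) (2 - 1) ((q - 1) div 2)"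
    using SP_propP_1[OF odd] by (simp add: q_def)
next
  fix X \<alpha> assume "signed_clique (SP :: 'a \<Rightarrow> _) 2 X \<alpha>"
  then obtain a b e\<^sub>1 e\<^sub>2 where X: "X = [a, b]" "\<alpha> = [e\<^sub>1, e\<^sub>2]" and ab: "a \<noteq> b"
    and e: "e\<^sub>1 = 1 \<or> e\<^sub>1 = -1" "e\<^sub>2 = 1 \<or> e\<^sub>2 = -1"
    by (rule signed_clique_2E)
  have "q - 1 \<le> 2 * (int (card (successors SP X \<alpha>)) + int (card (successors SP X (map uminus \<alpha>)))
      + (if set \<alpha> \<subseteq> {1} then 1 else 0) + (if set \<alpha> \<subseteq> {-1} then 1 else 0))"
    using card_SP_successors_2[OF odd ab e] card_SP_successors_2[OF odd ab, of "- e\<^sub>1" "- e\<^sub>2"] e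
    unfolding X q_def by (elim disjE) auto
  then show "(q - 1) div 2 \<le> int (card (successors SP X \<alpha>)) + int (card (successors SP X (map uminus \<alpha>)))
      + (if set \<alpha> \<subseteq> {1} then 1 else 0) + (if set \<alpha> \<subseteq> {-1} then 1 else 0)"
    by (rule div_le_of_le_mult) simp
qed

lemma Tr_propP_3:
  assumes odd: "odd (card (UNIV :: 'a::{finite,field} set))"
  defines "q \<equiv> int (card (UNIV :: 'a set))"
  shows "propP (Tr :: ('a option \<times> bool) \<Rightarrow> _) 3 ((q - 5) div 4)"
  unfolding Tr_def
proof (intro propP_AT[OF SPplus_irreflexive] propP_antipodal_SPplus)
  show "propP (SP :: 'a \<Rightarrow> _) (3 - 1) ((q - 5) div 4)"
    using SP_propP_2[OF odd] by (simp add: q_def)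
next
  fix X \<alpha> assume "signed_clique (SP :: 'a \<Rightarrow> _) 3 X \<alpha>"
  then obtain a b c e\<^sub>1 e\<^sub>2 e\<^sub>3 where X: "X = [a, b, c]" "\<alpha> = [e\<^sub>1, e\<^sub>2, e\<^sub>3]"
    and distinct: "a \<noteq> b" "a \<noteq> c" "b \<noteq> c"
    and e: "e\<^sub>1 = 1 \<or> e\<^sub>1 = -1" "e\<^sub>2 = 1 \<or> e\<^sub>2 = -1" "e\<^sub>3 = 1 \<or> e\<^sub>3 = -1"
    by (rule signed_clique_3E)
  let ?S = "e\<^sub>1 * e\<^sub>2 * (1 + sq (a - c) * sq (b - c)) + e\<^sub>1 * e\<^sub>3 * (1 + sq (a - b) * sq (c - b))
            + e\<^sub>2 * e\<^sub>3 * (1 + sq (b - a) * sq (c - a))"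
  have "4 * (int (card (successors SP X \<alpha>)) + int (card (successors SP X (map uminus \<alpha>)))) = q - 3 - ?S"
    using card_SP_successors_3_antipodal[OF odd distinct e] by (simp add: X q_def)
  moreover have "?S \<le> 2 + 4 * (if e\<^sub>1 = e\<^sub>2 \<and> e\<^sub>2 = e\<^sub>3 then 1 else 0)"
    by (rule three_sign_bound[OF sq_product_cases sq_product_cases sq_product_cases e])
  moreover have "(if set \<alpha> \<subseteq> {1} then 1 else 0) + (if set \<alpha> \<subseteq> {-1} then 1 else 0)
      = (if e\<^sub>1 = e\<^sub>2 \<and> e\<^sub>2 = e\<^sub>3 then 1 else (0::int))"
    using e unfolding X by auto
  ultimately have "q - 5 \<le> 4 * (int (card (successors SP X \<alpha>)) + int (card (successors SP X (map uminus \<alpha>)))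
      + (if set \<alpha> \<subseteq> {1} then 1 else 0) + (if set \<alpha> \<subseteq> {-1} then 1 else 0))"
    by (smt (verit))
  then show "(q - 5) div 4 \<le> int (card (successors SP X \<alpha>)) + int (card (successors SP X (map uminus \<alpha>)))
      + (if set \<alpha> \<subseteq> {1} then 1 else 0) + (if set \<alpha> \<subseteq> {-1} then 1 else 0)"
    by (rule div_le_of_le_mult) simp
qed


section \<open>Part (3): the antitwinned graph AT(SP_q)\<close>

lemma AT_SP_propP_1:
  assumes odd: "odd (card (UNIV :: 'a::{finite,field} set))"
  defines "q \<equiv> int (card (UNIV :: 'a set))"
  shows "propP (AT (SP :: 'a \<Rightarrow> _)) 1 (q - 1)"
proof (rule propP_AT[OF SP_irreflexive], unfold propP_antipodal_def, intro allI impI)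
  fix X \<alpha> assume "signed_clique (SP :: 'a \<Rightarrow> _) 1 X \<alpha>"
  then obtain a e where "X = [a]" "\<alpha> = [e]" "e = 1 \<or> e = -1"
    by (rule signed_clique_1E)
  then show "q - 1 \<le> int (card (successors SP X \<alpha>)) + int (card (successors SP X (map uminus \<alpha>)))"
    using card_SP_successors_1[OF odd, of e a] card_SP_successors_1[OF odd, of "- e" a]
    by (auto simp: q_def)
qed

lemma AT_SP_propP_2:
  assumes odd: "odd (card (UNIV :: 'a::{finite,field} set))"
  defines "q \<equiv> int (card (UNIV :: 'a set))"
  shows "propP (AT (SP :: 'a \<Rightarrow> _)) 2 ((q - 3) div 2)"
proof (rule propP_AT[OF SP_irreflexive], unfold propP_antipodal_def, intro allI impI)
  fix X \<alpha> assume "signed_clique (SP :: 'a \<Rightarrow> _) 2 X \<alpha>"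
  then obtain a b e\<^sub>1 e\<^sub>2 where X: "X = [a, b]" "\<alpha> = [e\<^sub>1, e\<^sub>2]" and ab: "a \<noteq> b"
    and e: "e\<^sub>1 = 1 \<or> e\<^sub>1 = -1" "e\<^sub>2 = 1 \<or> e\<^sub>2 = -1"
    by (rule signed_clique_2E)
  have "q - 3 \<le> 2 * (int (card (successors SP X \<alpha>)) + int (card (successors SP X (map uminus \<alpha>))))"
    using card_SP_successors_2[OF odd ab e] card_SP_successors_2[OF odd ab, of "- e\<^sub>1" "- e\<^sub>2"] e
    unfolding X q_def by (elim disjE) auto
  then show "(q - 3) div 2 \<le> int (card (successors SP X \<alpha>)) + int (card (successors SP X (map uminus \<alpha>)))"
    by (rule div_le_of_le_mult) simp
qed

lemma AT_SP_propP_3: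
  assumes odd: "odd (card (UNIV :: 'a::{finite,field} set))"
  defines "q \<equiv> int (card (UNIV :: 'a set))"
  shows "propP (AT (SP :: 'a \<Rightarrow> _)) 3 (max 0 ((q - 9) div 4))"
proof (rule propP_AT[OF SP_irreflexive], unfold propP_antipodal_def, intro allI impI)
  fix X \<alpha> assume "signed_clique (SP :: 'a \<Rightarrow> _) 3 X \<alpha>"
  then obtain a b c e\<^sub>1 e\<^sub>2 e\<^sub>3 where X: "X = [a, b, c]" "\<alpha> = [e\<^sub>1, e\<^sub>2, e\<^sub>3]"
    and distinct: "a \<noteq> b" "a \<noteq> c" "b \<noteq> c"
    and e: "e\<^sub>1 = 1 \<or> e\<^sub>1 = -1" "e\<^sub>2 = 1 \<or> e\<^sub>2 = -1" "e\<^sub>3 = 1 \<or> e\<^sub>3 = -1"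
    by (rule signed_clique_3E)
  let ?S = "e\<^sub>1 * e\<^sub>2 * (1 + sq (a - c) * sq (b - c)) + e\<^sub>1 * e\<^sub>3 * (1 + sq (a - b) * sq (c - b))
            + e\<^sub>2 * e\<^sub>3 * (1 + sq (b - a) * sq (c - a))"
  have "4 * (int (card (successors SP X \<alpha>)) + int (card (successors SP X (map uminus \<alpha>)))) = q - 3 - ?S"
    using card_SP_successors_3_antipodal[OF odd distinct e] by (simp add: X q_def)
  moreover have "?S \<le> 2 + 4 * (if e\<^sub>1 = e\<^sub>2 \<and> e\<^sub>2 = e\<^sub>3 then 1 else 0)"
    by (rule three_sign_bound[OF sq_product_cases sq_product_cases sq_product_cases e])
  ultimately have "q - 9 \<le> 4 * (int (card (successors SP X \<alpha>)) + int (card (successors SP X (map uminus \<alpha>))))"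
    by (simp split: if_splits)
  then show "max 0 ((q - 9) div 4) \<le> int (card (successors SP X \<alpha>)) + int (card (successors SP X (map uminus \<alpha>)))"
    by (simp add: div_le_of_le_mult)
qed


text \<open>The hypothesis q = 1 (mod 4) is used only through the oddness of q.\<close>

theorem mainTheorem10:
  fixes q :: int
  assumes "q = int (card (UNIV :: ('a::{finite, field}) set))"
    and "q mod 4 = 1"
  shows "propP (SP :: 'a \<Rightarrow> 'a \<Rightarrow> int option) 1 ((q - 1) div 2)
       \<and> propP (SP :: 'a \<Rightarrow> 'a \<Rightarrow> int option) 2 ((q - 5) div 4)
       \<and> propP (Tr :: ('a option \<times> bool) \<Rightarrow> _ \<Rightarrow> _) 1 q
       \<and> propP (Tr :: ('a option \<times> bool) \<Rightarrow> _ \<Rightarrow> _) 2 ((q - 1) div 2)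
       \<and> propP (Tr :: ('a option \<times> bool) \<Rightarrow> _ \<Rightarrow> _) 3 ((q - 5) div 4)
       \<and> propP (AT (SP :: 'a \<Rightarrow> 'a \<Rightarrow> int option)) 1 (q - 1)
       \<and> propP (AT (SP :: 'a \<Rightarrow> 'a \<Rightarrow> int option)) 2 ((q - 3) div 2)
       \<and> propP (AT (SP :: 'a \<Rightarrow> 'a \<Rightarrow> int option)) 3 (max 0 ((q - 9) div 4))"
proof -
  have odd: "odd (card (UNIV :: 'a set))"
    using assms by presburger
  show ?thesis
    unfolding assms(1)
    using SP_propP_1[OF odd] SP_propP_2[OF odd]
      Tr_propP_1[OF odd] Tr_propP_2[OF odd] Tr_propP_3[OF odd]
      AT_SP_propP_1[OF odd] AT_SP_propP_2[OF odd] AT_SP_propP_3[OF odd]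
    by blast
qed

end
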